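(* With $\ell_n=\Psi(L_n)$, $z_n=\Psi(Z_n)$, $h_n=\Psi(H_n)$ for $n\ge1$ and $\ell_0=z_0=h_0=1$: (i) $\ell_n=4\ell_{n-1}+\ell_{n-4}+\ell_{n-5}$ for $n\ge5$, with $\ell_0=1,\ell_1=5,\ell_2=20,\ell_3=79,\ell_4=317$; (ii) $z_n=3z_{n-1}+z_{n-2}+6z_{n-3}+7z_{n-4}+7z_{n-5}+5z_{n-6}+z_{n-7}$ for $n\ge7$, with $z_0=1,z_1=5,z_2=20,z_3=75,z_4=288,z_5=1105,z_6=4234$; (iii) $h_n=h_{n-1}+7h_{n-2}+12h_{n-3}+6h_{n-4}+7h_{n-5}+4h_{n-6}+2h_{n-7}$ for $n\ge7$, with $h_0=1,h_1=5,h_2=20,h_3=75,h_4=288,h_5=1094,h_6=4171$.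
   Context: A matching of a graph is a set of pairwise vertex-disjoint edges; it is maximal if it is not a proper subset of another matching. $\Psi(G)$ is the number of maximal matchings of $G$. A benzenoid system is a connected plane graph without cut-vertices in which every bounded face is a hexagon, any two hexagonal faces being either disjoint or sharing exactly one edge (then they are adjacent). It is catacondensed if no vertex lies in three hexagons, and a benzenoid chain if moreover no hexagon is adjacent to three other hexagons; its length is its number of hexagons. In a chain, the two hexagons adjacent to only one other hexagon are terminal, the rest interior. An interior hexagon has exactly two vertices of degree 2; it is straight if these are non-adjacent and kinky if they are adjacent. $L_n$ (polyacene) is the benzenoid chain of length $n$ all of whose interior hexagons are straight. $Z_n$ (zig-zag polyphenacene) is the benzenoid chain of length $n$ with all interior hexagons kinky and successive kinks turning alternately in opposite directions; $H_n$ (helicene) is the one of length $n$ with all interior hexagons kinky and all kinks turning in the same direction (viewed as an abstract graph). *)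

theory Defs
  imports Main
begin

text \<open>Graphs are given by their edge sets: each edge is a 2-element set of vertices.\<close>

definition matching :: "'a set set \<Rightarrow> bool" where
  "matching M \<longleftrightarrow> (\<forall>e\<in>M. \<forall>f\<in>M. e \<noteq> f \<longrightarrow> e \<inter> f = {})"

definition maximal_matching :: "'a set set \<Rightarrow> 'a set set \<Rightarrow> bool" where
  "maximal_matching E M \<longleftrightarrow> M \<subseteq> E \<and> matching M \<and>
     \<not> (\<exists>M'. M \<subset> M' \<and> M' \<subseteq> E \<and> matching M')"

definition Psi :: "'a set set \<Rightarrow> nat" where
  "Psi E = card {M. maximal_matching E M}"

text \<open>Hexagon attached along the edge a-b, with fresh vertices k, k+1, k+2, k+3;
  its (counterclockwise) boundary cycle is a, b, k, k+1, k+2, k+3.\<close>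
definition hex :: "nat \<Rightarrow> nat \<Rightarrow> nat \<Rightarrow> nat set set" where
  "hex a b k = {{a,b},{b,k},{k,k+1},{k+1,k+2},{k+2,k+3},{k+3,a}}"

text \<open>Edge of the current hexagon at which the next hexagon is attached
  (oriented counterclockwise for the next hexagon):
  0 = kink to one side, 1 = straight (opposite edge), 2 = kink to the other side.\<close>
fun exit_edge :: "nat \<Rightarrow> nat \<Rightarrow> nat \<times> nat" where
  "exit_edge d k = (if d = 0 then (k+1, k) else if d = 1 then (k+2, k+1) else (k+3, k+2))"

fun hexchain :: "nat \<Rightarrow> nat \<Rightarrow> nat \<Rightarrow> nat list \<Rightarrow> nat set set" where
  "hexchain a b k [] = hex a b k"
| "hexchain a b k (d # ds) =
     hex a b k \<union> (case exit_edge d k of (a', b') \<Rightarrow> hexchain a' b' (k+4) ds)"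

text \<open>Benzenoid chain with length ds + 1 hexagons.\<close>
definition benz_chain :: "nat list \<Rightarrow> nat set set" where
  "benz_chain ds = hexchain 0 1 2 ds"

definition polyacene :: "nat \<Rightarrow> nat set set" where
  "polyacene n = benz_chain (replicate (n - 1) 1)"

definition zigzag :: "nat \<Rightarrow> nat set set" where
  "zigzag n = benz_chain (map (\<lambda>i. if even i then 0 else 2) [0..<n - 1])"

definition helicene :: "nat \<Rightarrow> nat set set" where
  "helicene n = benz_chain (replicate (n - 1) 0)"

definition ell :: "nat \<Rightarrow> nat" where "ell n = (if n = 0 then 1 else Psi (polyacene n))"
definition zz :: "nat \<Rightarrow> nat" where "zz n = (if n = 0 then 1 else Psi (zigzag n))"
definition hh :: "nat \<Rightarrow> nat" where "hh n = (if n = 0 then 1 else Psi (helicene n))"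

end

theory Submission
  imports Defs
begin

text \<open>Cut a benzenoid chain at the edge shared by its first two hexagons.
  A maximal matching is the same as a matching that meets every edge, and such a matching splits
  into a part on each side that interact only through which endpoints of the cut edge each side
  covers: sixteen boundary states. Counting the local configurations of one hexagon between its
  entry and exit edge gives a \<open>16 \<times> 16\<close> matrix for each of the three attachment directions, and
  \<open>\<Psi>\<close> of a chain is a product of these matrices applied to a fixed vector. For \<open>L\<^sub>n\<close> and \<open>H\<^sub>n\<close>
  this is a power of one matrix; for \<open>Z\<^sub>n\<close> the two kink matrices are conjugate by swapping the
  endpoints of the cut edge, so again a single matrix suffices. A linear relation among the first
  few vectors of such an orbit, verified by computation, then holds for all of them.\<close>

lemma matching_subset: "matching M \<Longrightarrow> N \<subseteq> M \<Longrightarrow> matching N"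
  unfolding matching_def by blast

lemma matching_Un:
  assumes "matching L" "matching M" "\<Union>L \<inter> \<Union>M = {}"
  shows "matching (L \<union> M)"
  using assms unfolding matching_def by blast

lemma maximal_matching_iff_dominating:
  assumes "{} \<notin> E"
  shows "maximal_matching E M \<longleftrightarrow> M \<subseteq> E \<and> matching M \<and> (\<forall>e\<in>E. e \<inter> \<Union>M \<noteq> {})"
proof
  assume mm: "maximal_matching E M"
  hence M: "M \<subseteq> E" "matching M" unfolding maximal_matching_def by auto
  have "e \<inter> \<Union>M \<noteq> {}" if "e \<in> E" for e
  proof
    assume dis: "e \<inter> \<Union>M = {}"
    have "e \<noteq> {}" using assms that by blast
    hence "e \<notin> M" using dis by blast
    moreover have "matching (insert e M)" using M(2) dis unfolding matching_def by blast
    ultimately show False using mm that M(1) unfolding maximal_matching_def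
      by (metis insert_subset psubsetI subset_insertI)
  qed
  thus "M \<subseteq> E \<and> matching M \<and> (\<forall>e\<in>E. e \<inter> \<Union>M \<noteq> {})" using M by blast
next
  assume A: "M \<subseteq> E \<and> matching M \<and> (\<forall>e\<in>E. e \<inter> \<Union>M \<noteq> {})"
  have "\<not> (\<exists>M'. M \<subset> M' \<and> M' \<subseteq> E \<and> matching M')"
  proof
    assume "\<exists>M'. M \<subset> M' \<and> M' \<subseteq> E \<and> matching M'"
    then obtain M' e where M': "M \<subset> M'" "M' \<subseteq> E" "matching M'" "e \<in> M'" "e \<notin> M" by blast
    have "e \<inter> \<Union>M = {}" using M' unfolding matching_def by fastforce
    thus False using A M' by blast
  qed
  thus "maximal_matching E M" using A unfolding maximal_matching_def by blast
qed

text \<open>Matchings of \<open>E\<close> that cover exactly \<open>Y\<close> of the boundary edge \<open>{p, q}\<close>, avoid the vertices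
  \<open>X\<close> (already covered from outside), and dominate every edge once \<open>X\<close> counts as covered.\<close>
definition dmatchings :: "'a set set \<Rightarrow> 'a \<Rightarrow> 'a \<Rightarrow> 'a set \<Rightarrow> 'a set \<Rightarrow> 'a set set set" where
  "dmatchings E p q X Y = {M. M \<subseteq> E \<and> matching M \<and> \<Union>M \<inter> {p, q} = Y \<and> \<Union>M \<inter> X = {}
     \<and> (\<forall>e\<in>E. e \<inter> (\<Union>M \<union> X) \<noteq> {})}"

lemma finite_dmatchings: "finite E \<Longrightarrow> finite (dmatchings E p q X Y)"
  by (rule finite_subset[of _ "Pow E"]) (auto simp: dmatchings_def)

lemma Psi_eq_sum_dmatchings:
  assumes "finite E" "{} \<notin> E"
  shows "Psi E = (\<Sum>Y\<in>Pow {p, q}. card (dmatchings E p q {} Y))"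
proof -
  have mem: "maximal_matching E M \<longleftrightarrow> M \<in> dmatchings E p q {} (\<Union>M \<inter> {p, q})" for M
    by (simp add: maximal_matching_iff_dominating[OF assms(2)] dmatchings_def)
  have trace: "M \<in> dmatchings E p q {} Y \<Longrightarrow> Y = \<Union>M \<inter> {p, q}" for M Y
    unfolding dmatchings_def by blast
  have "{M. maximal_matching E M} = (\<Union>Y\<in>Pow {p, q}. dmatchings E p q {} Y)"
  proof (intro set_eqI iffI)
    fix M assume "M \<in> {M. maximal_matching E M}"
    hence "M \<in> dmatchings E p q {} (\<Union>M \<inter> {p, q})" using mem by blast
    thus "M \<in> (\<Union>Y\<in>Pow {p, q}. dmatchings E p q {} Y)" by (rule UN_I[rotated]) blast
  next
    fix M assume "M \<in> (\<Union>Y\<in>Pow {p, q}. dmatchings E p q {} Y)"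
    then obtain Y where Y: "M \<in> dmatchings E p q {} Y" by blast
    hence "M \<in> dmatchings E p q {} (\<Union>M \<inter> {p, q})" unfolding trace[OF Y, symmetric] .
    thus "M \<in> {M. maximal_matching E M}" using mem by blast
  qed
  moreover have "dmatchings E p q {} Y \<inter> dmatchings E p q {} Y' = {}" if "Y \<noteq> Y'" for Y Y'
  proof -
    have "M \<notin> dmatchings E p q {} Y'" if "M \<in> dmatchings E p q {} Y" for M
      using trace[OF that] trace[of M Y'] \<open>Y \<noteq> Y'\<close> by auto
    thus ?thesis by blast
  qed
  ultimately show ?thesis
    unfolding Psi_def using assms(1) by (simp add: card_UN_disjoint finite_dmatchings)
qed

text \<open>The part of a dominating matching on the side \<open>H\<close> of a cut edge \<open>f = {p', q'}\<close>: it avoids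
  \<open>f\<close>, meets \<open>{p', q'}\<close> exactly in \<open>X'\<close>, and treats \<open>Y'\<close> as covered from the other side.\<close>
definition cut_dmatchings :: "'a set set \<Rightarrow> 'a set \<Rightarrow> 'a \<Rightarrow> 'a \<Rightarrow> 'a \<Rightarrow> 'a \<Rightarrow>
    'a set \<Rightarrow> 'a set \<Rightarrow> 'a set \<Rightarrow> 'a set \<Rightarrow> 'a set set set" where
  "cut_dmatchings H f p q p' q' X Y X' Y' = {L. L \<subseteq> H - {f} \<and> matching L \<and> \<Union>L \<inter> Y' = {}
     \<and> \<Union>L \<inter> {p, q} = Y \<and> \<Union>L \<inter> X = {} \<and> \<Union>L \<inter> {p', q'} = X'
     \<and> (\<forall>e\<in>H - {f}. e \<inter> (\<Union>L \<union> Y' \<union> X) \<noteq> {})}"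

lemma finite_cut_dmatchings: "finite H \<Longrightarrow> finite (cut_dmatchings H f p q p' q' X Y X' Y')"
  by (rule finite_subset[of _ "Pow H"]) (auto simp: cut_dmatchings_def)


text \<open>The state \<open>(x1, x2, y1, y2)\<close> of an ordered edge \<open>(p, q)\<close> records which endpoints are
  covered from outside (\<open>x\<close>) and which by the matching inside (\<open>y\<close>).\<close>
type_synonym bstate = "bool \<times> bool \<times> bool \<times> bool"

definition bstates :: "bstate list" where
  "bstates = [(x1, x2, y1, y2). x1 \<leftarrow> [False, True], x2 \<leftarrow> [False, True],
                                y1 \<leftarrow> [False, True], y2 \<leftarrow> [False, True]]"

lemma distinct_bstates: "distinct bstates"
  by (simp add: bstates_def)

lemma set_bstates: "set bstates = UNIV"
proof -
  have "s \<in> set bstates" for s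
  proof -
    obtain x1 x2 y1 y2 where "s = (x1, x2, y1, y2)" by (cases s) auto
    thus ?thesis by (cases x1; cases x2; cases y1; cases y2) (simp_all add: bstates_def)
  qed
  thus ?thesis by auto
qed

lemma sum_list_bstates: "(\<Sum>t\<leftarrow>bstates. f t) = sum f UNIV"
  using sum_list_distinct_conv_sum_set[OF distinct_bstates] by (simp add: set_bstates)

lemma ball_bstatesD: "\<forall>s\<in>set bstates. P s \<Longrightarrow> P s"
  unfolding set_bstates by (erule bspec) (rule UNIV_I)

definition pick :: "bool \<Rightarrow> bool \<Rightarrow> 'a \<Rightarrow> 'a \<Rightarrow> 'a set" where
  "pick x y p q = (if x then {p} else {}) \<union> (if y then {q} else {})"

fun outer :: "bstate \<Rightarrow> 'a \<Rightarrow> 'a \<Rightarrow> 'a set" where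
  "outer (x1, x2, _, _) p q = pick x1 x2 p q"

fun inner :: "bstate \<Rightarrow> 'a \<Rightarrow> 'a \<Rightarrow> 'a set" where
  "inner (_, _, y1, y2) p q = pick y1 y2 p q"

lemma pick_subset: "pick x y p q \<subseteq> {p, q}"
  by (auto simp: pick_def)

lemma outer_subset: "outer s p q \<subseteq> {p, q}"
  by (cases s) (simp add: pick_subset)

lemma pick_mem: "pick (p \<in> A) (q \<in> A) p q = A \<inter> {p, q}"
  by (auto simp: pick_def)

lemma pick_eq_Int_iff: "p \<noteq> q \<Longrightarrow> pick x y p q = A \<inter> {p, q} \<longleftrightarrow> x = (p \<in> A) \<and> y = (q \<in> A)"
  by (auto simp: pick_def)


subsection \<open>Gluing along an edge\<close>

locale edge_gluing =
  fixes H T :: "'a set set" and f :: "'a set" and p q p' q' :: 'a and VH VT :: "'a set"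
  assumes finite: "finite H" "finite T"
    and cut_edge: "f = {p', q'}" "f \<in> H" "f \<in> T" "p' \<noteq> q'"
    and H_vertices: "\<forall>e\<in>H. e \<subseteq> VH" and T_vertices: "\<forall>e\<in>T. e \<subseteq> VT"
    and common_vertices: "VH \<inter> VT = {p', q'}"
    and boundary: "p \<notin> VT" "q \<notin> VT"
    and common_edges: "H \<inter> T = {f}"
begin

definition cut_state :: "'a set set \<Rightarrow> 'a set set \<Rightarrow> bstate" where
  "cut_state L M = (p' \<in> \<Union>L, q' \<in> \<Union>L, p' \<in> \<Union>M, q' \<in> \<Union>M)"

lemma dmatchings_split:
  assumes N: "N \<in> dmatchings (H \<union> T) p q X0 Y0" and X0: "X0 \<subseteq> {p, q}"
  defines "t \<equiv> cut_state (N - T) (N \<inter> T)"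
  shows "N - T \<in> cut_dmatchings H f p q p' q' X0 Y0 (outer t p' q') (inner t p' q')"
    and "N \<inter> T \<in> dmatchings T p' q' (outer t p' q') (inner t p' q')"
proof -
  define L where "L = N - T"
  define M where "M = N \<inter> T"
  have N1: "N \<subseteq> H \<union> T" "matching N" "\<Union>N \<inter> {p,q} = Y0" "\<Union>N \<inter> X0 = {}"
    "\<forall>e\<in>H \<union> T. e \<inter> (\<Union>N \<union> X0) \<noteq> {}" using N unfolding dmatchings_def by auto
  have NLM: "N = L \<union> M" unfolding L_def M_def by blast
  have Lsub: "L \<subseteq> H - {f}" unfolding L_def using N1(1) cut_edge(3) by blast
  have Msub: "M \<subseteq> T" unfolding M_def by blast
  have XL: "outer t p' q' = \<Union>L \<inter> {p',q'}"
    unfolding t_def cut_state_def L_def outer.simps by (rule pick_mem)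
  have YM: "inner t p' q' = \<Union>M \<inter> {p',q'}"
    unfolding t_def cut_state_def M_def inner.simps by (rule pick_mem)
  have disj: "\<Union>L \<inter> \<Union>M = {}"
  proof -
    have "e \<inter> e' = {}" if "e \<in> L" "e' \<in> M" for e e'
    proof -
      have "e \<noteq> e'" using that unfolding L_def M_def by blast
      moreover have "e \<in> N" "e' \<in> N" using that NLM by auto
      ultimately show ?thesis using N1(2) unfolding matching_def by blast
    qed
    thus ?thesis by blast
  qed
  have uL: "\<Union>L \<subseteq> VH" using H_vertices Lsub by blast
  have uM: "\<Union>M \<subseteq> VT" using T_vertices Msub by blast
  show "N - T \<in> cut_dmatchings H f p q p' q' X0 Y0 (outer t p' q') (inner t p' q')"
    unfolding L_def[symmetric] cut_dmatchings_def
  proof (intro CollectI conjI)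
    show "L \<subseteq> H - {f}" by (fact Lsub)
    show "matching L" using N1(2) matching_subset unfolding L_def by blast
    show "\<Union>L \<inter> inner t p' q' = {}" using disj YM by blast
    show "\<Union>L \<inter> {p,q} = Y0" using N1(3) NLM uM boundary by blast
    show "\<Union>L \<inter> X0 = {}" using N1(4) NLM by blast
    show "\<Union>L \<inter> {p',q'} = outer t p' q'" using XL by simp
    show "\<forall>e\<in>H - {f}. e \<inter> (\<Union>L \<union> inner t p' q' \<union> X0) \<noteq> {}"
    proof
      fix e assume e: "e \<in> H - {f}"
      have "e \<inter> (\<Union>N \<union> X0) \<noteq> {}" using N1(5) e by blast
      moreover have "e \<subseteq> VH" using H_vertices e by blast
      ultimately show "e \<inter> (\<Union>L \<union> inner t p' q' \<union> X0) \<noteq> {}"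
        using NLM YM uM common_vertices by blast
    qed
  qed
  show "N \<inter> T \<in> dmatchings T p' q' (outer t p' q') (inner t p' q')"
    unfolding M_def[symmetric] dmatchings_def
  proof (intro CollectI conjI)
    show "M \<subseteq> T" by (fact Msub)
    show "matching M" using N1(2) matching_subset unfolding M_def by blast
    show "\<Union>M \<inter> {p',q'} = inner t p' q'" using YM by simp
    show "\<Union>M \<inter> outer t p' q' = {}" using disj XL by blast
    show "\<forall>e\<in>T. e \<inter> (\<Union>M \<union> outer t p' q') \<noteq> {}"
    proof
      fix e assume e: "e \<in> T"
      have "e \<inter> (\<Union>N \<union> X0) \<noteq> {}" using N1(5) e by blast
      moreover have "e \<subseteq> VT" using T_vertices e by blast
      ultimately show "e \<inter> (\<Union>M \<union> outer t p' q') \<noteq> {}"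
        using NLM XL uL common_vertices X0 boundary by blast
    qed
  qed
qed

lemma dmatchings_join:
  assumes L: "L \<in> cut_dmatchings H f p q p' q' X0 Y0 (outer t p' q') (inner t p' q')"
    and M: "M \<in> dmatchings T p' q' (outer t p' q') (inner t p' q')" and X0: "X0 \<subseteq> {p, q}"
  shows "L \<union> M \<in> dmatchings (H \<union> T) p q X0 Y0"
    and "(L \<union> M) - T = L" "(L \<union> M) \<inter> T = M" "cut_state L M = t"
proof -
  have L1: "L \<subseteq> H - {f}" "matching L" "\<Union>L \<inter> inner t p' q' = {}" "\<Union>L \<inter> {p,q} = Y0"
    "\<Union>L \<inter> X0 = {}" "\<Union>L \<inter> {p',q'} = outer t p' q'"
    "\<forall>e\<in>H - {f}. e \<inter> (\<Union>L \<union> inner t p' q' \<union> X0) \<noteq> {}"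
    using L unfolding cut_dmatchings_def by auto
  have M1: "M \<subseteq> T" "matching M" "\<Union>M \<inter> {p',q'} = inner t p' q'" "\<Union>M \<inter> outer t p' q' = {}"
    "\<forall>e\<in>T. e \<inter> (\<Union>M \<union> outer t p' q') \<noteq> {}" using M unfolding dmatchings_def by auto
  have uL: "\<Union>L \<subseteq> VH" using H_vertices L1(1) by blast
  have uM: "\<Union>M \<subseteq> VT" using T_vertices M1(1) by blast
  have disj: "\<Union>L \<inter> \<Union>M = {}" using uL uM common_vertices L1(3) M1(3) by blast
  show "L \<union> M \<in> dmatchings (H \<union> T) p q X0 Y0" unfolding dmatchings_def
  proof (intro CollectI conjI)
    show "L \<union> M \<subseteq> H \<union> T" using L1(1) M1(1) by blast
    show "matching (L \<union> M)" using L1(2) M1(2) disj by (rule matching_Un)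
    show "\<Union>(L \<union> M) \<inter> {p,q} = Y0" using L1(4) uM boundary by blast
    show "\<Union>(L \<union> M) \<inter> X0 = {}" using L1(5) uM boundary X0 by blast
    show "\<forall>e\<in>H \<union> T. e \<inter> (\<Union>(L \<union> M) \<union> X0) \<noteq> {}"
    proof
      fix e assume e: "e \<in> H \<union> T"
      show "e \<inter> (\<Union>(L \<union> M) \<union> X0) \<noteq> {}"
      proof (cases "e \<in> T")
        case True
        have "outer t p' q' \<subseteq> \<Union>L" using L1(6) by blast
        hence "\<Union>M \<union> outer t p' q' \<subseteq> \<Union>(L \<union> M) \<union> X0" by blast
        moreover have "e \<inter> (\<Union>M \<union> outer t p' q') \<noteq> {}" using M1(5) True by blast
        ultimately show ?thesis by blast
      next
        case False
        hence "e \<in> H - {f}" using e cut_edge(3) by blast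
        have "inner t p' q' \<subseteq> \<Union>M" using M1(3) by blast
        hence "\<Union>L \<union> inner t p' q' \<union> X0 \<subseteq> \<Union>(L \<union> M) \<union> X0" by blast
        moreover have "e \<inter> (\<Union>L \<union> inner t p' q' \<union> X0) \<noteq> {}" using L1(7) \<open>e \<in> H - {f}\<close> by blast
        ultimately show ?thesis by blast
      qed
    qed
  qed
  have "L \<inter> T = {}" using L1(1) common_edges by blast
  thus "(L \<union> M) - T = L" "(L \<union> M) \<inter> T = M" using M1(1) by blast+
  obtain t1 t2 t3 t4 where t: "t = (t1, t2, t3, t4)" by (cases t) auto
  have "pick t1 t2 p' q' = \<Union>L \<inter> {p',q'}" using L1(6) t by simp
  hence a: "t1 = (p' \<in> \<Union>L) \<and> t2 = (q' \<in> \<Union>L)" by (simp only: pick_eq_Int_iff[OF cut_edge(4)])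
  have "pick t3 t4 p' q' = \<Union>M \<inter> {p',q'}" using M1(3) t by simp
  hence b: "t3 = (p' \<in> \<Union>M) \<and> t4 = (q' \<in> \<Union>M)" by (simp only: pick_eq_Int_iff[OF cut_edge(4)])
  show "cut_state L M = t" using a b t unfolding cut_state_def by simp
qed

theorem card_dmatchings_glue:
  assumes X0: "X0 \<subseteq> {p, q}"
  shows "card (dmatchings (H \<union> T) p q X0 Y0) =
    (\<Sum>t\<leftarrow>bstates. card (cut_dmatchings H f p q p' q' X0 Y0 (outer t p' q') (inner t p' q'))
                 * card (dmatchings T p' q' (outer t p' q') (inner t p' q')))"
proof -
  define LT where "LT t = cut_dmatchings H f p q p' q' X0 Y0 (outer t p' q') (inner t p' q')" for t
  define GT where "GT t = dmatchings T p' q' (outer t p' q') (inner t p' q')" for t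
  define G where "G = dmatchings (H \<union> T) p q X0 Y0"
  define S where "S = (SIGMA t:UNIV. LT t \<times> GT t)"
  define \<phi> where "\<phi> N = (cut_state (N - T) (N \<inter> T), N - T, N \<inter> T)" for N
  have "inj_on \<phi> G"
  proof (rule inj_onI)
    fix N N' assume "\<phi> N = \<phi> N'"
    hence "N - T = N' - T" "N \<inter> T = N' \<inter> T" unfolding \<phi>_def by auto
    thus "N = N'" by blast
  qed
  moreover have "\<phi> ` G = S"
  proof
    show "\<phi> ` G \<subseteq> S"
      using dmatchings_split[OF _ X0] unfolding \<phi>_def G_def S_def LT_def GT_def by auto
    show "S \<subseteq> \<phi> ` G"
    proof
      fix x assume "x \<in> S"
      then obtain t L M where x: "x = (t, L, M)" and LM: "L \<in> LT t" "M \<in> GT t"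
        unfolding S_def by blast
      have "L \<union> M \<in> G" using dmatchings_join(1)[OF LM[unfolded LT_def GT_def] X0] unfolding G_def .
      moreover have "\<phi> (L \<union> M) = x"
        using dmatchings_join(2-4)[OF LM[unfolded LT_def GT_def] X0] unfolding \<phi>_def x by simp
      ultimately show "x \<in> \<phi> ` G" by (metis imageI)
    qed
  qed
  ultimately have "card G = card S" by (metis card_image)
  also have "\<dots> = (\<Sum>t\<in>UNIV. card (LT t) * card (GT t))"
    unfolding S_def using finite
    by (simp add: card_cartesian_product LT_def GT_def finite_cut_dmatchings finite_dmatchings)
  finally show ?thesis by (simp add: sum_list_bstates G_def LT_def GT_def)
qed

end


subsection \<open>A single hexagon\<close>

definition suc6 :: "nat \<Rightarrow> nat" where "suc6 i = (if i = 5 then 0 else Suc i)"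
definition pre6 :: "nat \<Rightarrow> nat" where "pre6 j = (if j = 0 then 5 else j - 1)"

lemma suc6_lt: "i < 6 \<Longrightarrow> suc6 i < 6" by (simp add: suc6_def)
lemma pre6_lt: "i < 6 \<Longrightarrow> pre6 i < 6" unfolding pre6_def by auto
lemma suc6_inj: "i < 6 \<Longrightarrow> j < 6 \<Longrightarrow> suc6 i = suc6 j \<Longrightarrow> i = j" by (auto simp: suc6_def split: if_splits)
lemma suc6_neq: "suc6 i \<noteq> i" by (simp add: suc6_def)
lemma suc6_eq_iff_pre6: "i < 6 \<Longrightarrow> j < 6 \<Longrightarrow> (j = suc6 i) = (i = pre6 j)" by (auto simp: suc6_def pre6_def)
lemma suc6_suc6_neq: "i < 6 \<Longrightarrow> suc6 (suc6 i) \<noteq> i" by (simp add: suc6_def)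

text \<open>A set of edges of a hexagon with vertices \<open>v 0, \<dots>, v 5\<close> is encoded by a list \<open>bs\<close> of six bits,
  bit \<open>i\<close> standing for the edge \<open>{v i, v (suc6 i)}\<close>. The predicates below are the index-level
  versions of \<open>outer\<close>, \<open>inner\<close> and of membership in \<open>cut_dmatchings\<close>;
  the latter is phrased with \<open>list_all\<close> so that it can be evaluated.\<close>
definition covered :: "bool list \<Rightarrow> nat \<Rightarrow> bool" where
  "covered bs j \<longleftrightarrow> bs ! j \<or> bs ! pre6 j"

fun outer_at :: "bstate \<Rightarrow> nat \<Rightarrow> nat \<Rightarrow> nat \<Rightarrow> bool" where
  "outer_at (x1, x2, _, _) m n j \<longleftrightarrow> (j = m \<and> x1) \<or> (j = n \<and> x2)"

fun inner_at :: "bstate \<Rightarrow> nat \<Rightarrow> nat \<Rightarrow> nat \<Rightarrow> bool" where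
  "inner_at (_, _, y1, y2) m n j \<longleftrightarrow> (j = m \<and> y1) \<or> (j = n \<and> y2)"

definition hex_ok :: "nat \<Rightarrow> nat \<Rightarrow> bstate \<Rightarrow> bstate \<Rightarrow> bool list \<Rightarrow> bool" where
  "hex_ok m2 m3 s t bs \<longleftrightarrow> \<not> bs ! m2
     \<and> list_all (\<lambda>i. \<not> (bs ! i \<and> bs ! suc6 i)) [0..<6]
     \<and> list_all (\<lambda>j. \<not> (covered bs j \<and> inner_at t m3 m2 j)) [0..<6]
     \<and> list_all (\<lambda>j. (covered bs j \<and> (j = 0 \<or> j = 1)) = inner_at s 0 1 j) [0..<6]
     \<and> list_all (\<lambda>j. \<not> (covered bs j \<and> outer_at s 0 1 j)) [0..<6]
     \<and> list_all (\<lambda>j. (covered bs j \<and> (j = m3 \<or> j = m2)) = outer_at t m3 m2 j) [0..<6]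
     \<and> list_all (\<lambda>i. i \<noteq> m2 \<longrightarrow>
         (covered bs i \<or> inner_at t m3 m2 i \<or> outer_at s 0 1 i) \<or>
         (covered bs (suc6 i) \<or> inner_at t m3 m2 (suc6 i) \<or> outer_at s 0 1 (suc6 i))) [0..<6]"

text \<open>The transfer matrix of a hexagon entered at \<open>(v 0, v 1)\<close> and left at \<open>(v (d + 3), v (d + 2))\<close>.\<close>
definition transfer :: "nat \<Rightarrow> bstate \<Rightarrow> bstate \<Rightarrow> nat" where
  "transfer d s t = length (filter (hex_ok (d + 2) (d + 3) s t) (List.n_lists 6 [False, True]))"

lemma list_all_upt: "list_all P [0..<n] \<longleftrightarrow> (\<forall>i<n. P i)"
  by (auto simp: list_all_iff)

locale hexagon =
  fixes v :: "nat \<Rightarrow> 'a"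
  assumes v_inj: "\<And>i j. i < 6 \<Longrightarrow> j < 6 \<Longrightarrow> v i = v j \<Longrightarrow> i = j"
begin

definition vset :: "(nat \<Rightarrow> bool) \<Rightarrow> 'a set" where "vset P = v ` {j. j < 6 \<and> P j}"
definition hedge :: "nat \<Rightarrow> 'a set" where "hedge i = {v i, v (suc6 i)}"
definition edges_of :: "bool list \<Rightarrow> 'a set set" where "edges_of bs = hedge ` {i. i < 6 \<and> bs ! i}"

lemma vset_int: "vset P \<inter> vset Q = vset (\<lambda>j. P j \<and> Q j)"
  unfolding vset_def using v_inj by blast

lemma vset_un: "vset P \<union> vset Q = vset (\<lambda>j. P j \<or> Q j)"
  unfolding vset_def by blast

lemma vset_empty: "vset P = {} \<longleftrightarrow> (\<forall>j<6. \<not> P j)"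
  unfolding vset_def by blast

lemma vset_eq: "vset P = vset Q \<longleftrightarrow> (\<forall>j<6. P j = Q j)"
proof
  assume A: "vset P = vset Q"
  show "\<forall>j<6. P j = Q j"
  proof (intro allI impI)
    fix j assume j: "j < (6::nat)"
    have "P j \<longleftrightarrow> v j \<in> vset P" unfolding vset_def using v_inj j by blast
    moreover have "Q j \<longleftrightarrow> v j \<in> vset Q" unfolding vset_def using v_inj j by blast
    ultimately show "P j = Q j" using A by simp
  qed
next
  assume "\<forall>j<6. P j = Q j" thus "vset P = vset Q" unfolding vset_def by auto
qed

lemma pick_eq_vset: "m < 6 \<Longrightarrow> n < 6 \<Longrightarrow> pick x y (v m) (v n) = vset (\<lambda>j. (j = m \<and> x) \<or> (j = n \<and> y))"
  unfolding vset_def pick_def by auto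

lemma pair_eq_vset: "m < 6 \<Longrightarrow> n < 6 \<Longrightarrow> {v m, v n} = vset (\<lambda>j. j = m \<or> j = n)"
  unfolding vset_def by auto

lemma hedge_Int_vset: "i < 6 \<Longrightarrow> hedge i \<inter> vset P \<noteq> {} \<longleftrightarrow> P i \<or> P (suc6 i)"
  unfolding vset_def hedge_def using v_inj suc6_lt by blast

lemma Union_edges_of: "\<Union>(edges_of bs) = vset (covered bs)"
proof (rule set_eqI)
  fix x
  show "x \<in> \<Union>(edges_of bs) \<longleftrightarrow> x \<in> vset (covered bs)"
  proof
    assume "x \<in> \<Union>(edges_of bs)"
    then obtain i where i: "i < 6" "bs!i" "x = v i \<or> x = v (suc6 i)"
      unfolding edges_of_def hedge_def by auto
    show "x \<in> vset (covered bs)"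
    proof (cases "x = v i")
      case True thus ?thesis using i unfolding vset_def covered_def by auto
    next
      case False
      hence x: "x = v (suc6 i)" using i by auto
      have "pre6 (suc6 i) = i" using suc6_eq_iff_pre6[OF i(1) suc6_lt[OF i(1)]] by simp
      thus ?thesis using x i suc6_lt unfolding vset_def covered_def by auto
    qed
  next
    assume "x \<in> vset (covered bs)"
    then obtain j where j: "j < 6" "bs!j \<or> bs!(pre6 j)" "x = v j" unfolding vset_def covered_def by auto
    show "x \<in> \<Union>(edges_of bs)"
    proof (cases "bs!j")
      case True thus ?thesis using j unfolding edges_of_def hedge_def by auto
    next
      case False
      hence b: "bs!(pre6 j)" using j by auto
      have "j = suc6 (pre6 j)" using suc6_eq_iff_pre6[OF pre6_lt[OF j(1)] j(1)] by simp
      hence "x \<in> hedge (pre6 j)" unfolding hedge_def using j by auto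
      thus ?thesis using b pre6_lt[OF j(1)] unfolding edges_of_def by auto
    qed
  qed
qed

lemma hedge_inj: "i < 6 \<Longrightarrow> j < 6 \<Longrightarrow> hedge i = hedge j \<Longrightarrow> i = j"
proof -
  assume ij: "i < 6" "j < 6" "hedge i = hedge j"
  have "v i \<in> hedge j" using ij(3) unfolding hedge_def by auto
  hence a: "i = j \<or> i = suc6 j" unfolding hedge_def using v_inj ij suc6_lt by blast
  have "v (suc6 i) \<in> hedge j" using ij(3) unfolding hedge_def by auto
  hence b: "suc6 i = j \<or> suc6 i = suc6 j" unfolding hedge_def using v_inj ij suc6_lt by blast
  show "i = j" using a b suc6_inj[OF ij(1,2)] suc6_suc6_neq[OF ij(2)] by auto
qed

lemma hedge_meet: "i < 6 \<Longrightarrow> j < 6 \<Longrightarrow> hedge i \<inter> hedge j \<noteq> {} \<Longrightarrow> i = j \<or> j = suc6 i \<or> i = suc6 j"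
proof -
  assume ij: "i < 6" "j < 6" "hedge i \<inter> hedge j \<noteq> {}"
  then obtain x where "x \<in> hedge i" "x \<in> hedge j" by blast
  hence "(v i = v j \<or> v i = v (suc6 j)) \<or> (v (suc6 i) = v j \<or> v (suc6 i) = v (suc6 j))"
    unfolding hedge_def by auto
  thus ?thesis using v_inj ij suc6_lt suc6_inj by metis
qed

lemma matching_edges_of: "matching (edges_of bs) \<longleftrightarrow> (\<forall>i<6. \<not>(bs!i \<and> bs!(suc6 i)))"
proof
  assume m: "matching (edges_of bs)"
  show "\<forall>i<6. \<not>(bs!i \<and> bs!(suc6 i))"
  proof (intro allI impI notI)
    fix i assume i: "i < (6::nat)" "bs!i \<and> bs!(suc6 i)"
    have in1: "hedge i \<in> edges_of bs" "hedge (suc6 i) \<in> edges_of bs" using i suc6_lt unfolding edges_of_def by auto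
    have "hedge i \<noteq> hedge (suc6 i)" using hedge_inj[OF i(1) suc6_lt[OF i(1)]] suc6_neq by metis
    moreover have "v (suc6 i) \<in> hedge i \<inter> hedge (suc6 i)" unfolding hedge_def by auto
    ultimately show False using m in1 unfolding matching_def by blast
  qed
next
  assume A: "\<forall>i<6. \<not>(bs!i \<and> bs!(suc6 i))"
  show "matching (edges_of bs)" unfolding matching_def
  proof (intro ballI impI)
    fix e f assume e: "e \<in> edges_of bs" and f: "f \<in> edges_of bs" and ne: "e \<noteq> f"
    obtain i where i: "i < 6" "bs!i" "e = hedge i" using e unfolding edges_of_def by auto
    obtain j where j: "j < 6" "bs!j" "f = hedge j" using f unfolding edges_of_def by auto
    show "e \<inter> f = {}"
    proof (rule ccontr)
      assume "e \<inter> f \<noteq> {}"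
      hence "i = j \<or> j = suc6 i \<or> i = suc6 j" using hedge_meet i j by blast
      thus False using A i j ne by auto
    qed
  qed
qed

lemma edges_of_subset_iff: "m < 6 \<Longrightarrow> edges_of bs \<subseteq> hedge ` {..<6} - {hedge m} \<longleftrightarrow> \<not> bs!m"
proof
  assume m: "m < 6" and s: "edges_of bs \<subseteq> hedge ` {..<6} - {hedge m}"
  show "\<not> bs!m"
  proof
    assume "bs!m" hence "hedge m \<in> edges_of bs" using m unfolding edges_of_def by auto
    thus False using s by blast
  qed
next
  assume m: "m < 6" and b: "\<not> bs!m"
  show "edges_of bs \<subseteq> hedge ` {..<6} - {hedge m}"
  proof
    fix e assume "e \<in> edges_of bs"
    then obtain i where i: "i < 6" "bs!i" "e = hedge i" unfolding edges_of_def by auto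
    have "i \<noteq> m" using i b by auto
    hence "hedge i \<noteq> hedge m" using hedge_inj i m by blast
    thus "e \<in> hedge ` {..<6} - {hedge m}" using i by auto
  qed
qed

lemma ball_hedges_minus_iff: "m < 6 \<Longrightarrow> (\<forall>e\<in>hedge ` {..<6} - {hedge m}. e \<inter> Z \<noteq> {}) \<longleftrightarrow> (\<forall>i<6. i \<noteq> m \<longrightarrow> hedge i \<inter> Z \<noteq> {})"
  using hedge_inj by auto

lemma edges_of_indicator: "L \<subseteq> hedge ` {..<6} \<Longrightarrow> L = edges_of (map (\<lambda>i. hedge i \<in> L) [0..<6])"
  unfolding edges_of_def by auto

lemma edges_of_inj: "length bs = 6 \<Longrightarrow> length bs' = 6 \<Longrightarrow> edges_of bs = edges_of bs' \<Longrightarrow> bs = bs'"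
proof -
  assume l: "length bs = 6" "length bs' = 6" and e: "edges_of bs = edges_of bs'"
  have mem: "hedge i \<in> edges_of cs \<longleftrightarrow> cs!i" if "i < 6" for i cs
    unfolding edges_of_def using hedge_inj that by auto
  show "bs = bs'"
  proof (rule nth_equalityI)
    show "length bs = length bs'" using l by simp
    fix i assume "i < length bs"
    hence "i < 6" using l by simp
    thus "bs!i = bs'!i" using mem[of i bs] mem[of i bs'] e by simp
  qed
qed

lemma edges_of_mem_cut_dmatchings_iff:
  assumes lt: "m2 < 6" "m3 < 6"
  shows "edges_of bs \<in> cut_dmatchings (hedge ` {..<6}) (hedge m2) (v 0) (v 1) (v m3) (v m2)
     (outer s (v 0) (v 1)) (inner s (v 0) (v 1)) (outer t (v m3) (v m2)) (inner t (v m3) (v m2))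
     \<longleftrightarrow> hex_ok m2 m3 s t bs"
proof -
  obtain x1 x2 y1 y2 where s: "s = (x1, x2, y1, y2)" by (cases s) auto
  obtain u1 u2 w1 w2 where t: "t = (u1, u2, w1, w2)" by (cases t) auto
  show ?thesis
    unfolding cut_dmatchings_def mem_Collect_eq s t outer.simps inner.simps Union_edges_of
    by (simp add: pick_eq_vset pair_eq_vset lt edges_of_subset_iff matching_edges_of ball_hedges_minus_iff
        vset_int vset_un vset_empty vset_eq hedge_Int_vset hex_ok_def list_all_upt)
qed

lemma card_cut_dmatchings_eq_length_filter:
  assumes lt: "m2 < 6" "m3 < 6"
  shows "card (cut_dmatchings (hedge ` {..<6}) (hedge m2) (v 0) (v 1) (v m3) (v m2)
     (outer s (v 0) (v 1)) (inner s (v 0) (v 1)) (outer t (v m3) (v m2)) (inner t (v m3) (v m2)))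
     = length (filter (hex_ok m2 m3 s t) (List.n_lists 6 [False, True]))"
proof -
  define Lc where "Lc = cut_dmatchings (hedge ` {..<6}) (hedge m2) (v 0) (v 1) (v m3) (v m2)
     (outer s (v 0) (v 1)) (inner s (v 0) (v 1)) (outer t (v m3) (v m2)) (inner t (v m3) (v m2))"
  define B where "B = {bs \<in> set (List.n_lists 6 [False, True]). hex_ok m2 m3 s t bs}"
  have iff: "edges_of bs \<in> Lc \<longleftrightarrow> hex_ok m2 m3 s t bs" for bs
    unfolding Lc_def by (rule edges_of_mem_cut_dmatchings_iff[OF lt])
  have "Lc = edges_of ` B"
  proof
    show "Lc \<subseteq> edges_of ` B"
    proof
      fix L assume L: "L \<in> Lc"
      define bs where "bs = map (\<lambda>i. hedge i \<in> L) [0..<6]"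
      have "L \<subseteq> hedge ` {..<6}" using L unfolding Lc_def cut_dmatchings_def by auto
      hence eq: "L = edges_of bs" unfolding bs_def by (rule edges_of_indicator)
      have "edges_of bs \<in> Lc" using L eq by simp
      moreover have "bs \<in> set (List.n_lists 6 [False, True])" by (simp add: set_n_lists bs_def UNIV_bool[symmetric])
      ultimately have "bs \<in> B" unfolding B_def using iff by blast
      thus "L \<in> edges_of ` B" using eq by blast
    qed
    show "edges_of ` B \<subseteq> Lc" using iff unfolding B_def by auto
  qed
  moreover have "inj_on edges_of B"
    by (rule inj_onI) (auto simp: B_def set_n_lists intro: edges_of_inj)
  ultimately have "card Lc = card B" by (simp add: card_image)
  also have "B = set (filter (hex_ok m2 m3 s t) (List.n_lists 6 [False, True]))" unfolding B_def by auto
  also have "card \<dots> = length (filter (hex_ok m2 m3 s t) (List.n_lists 6 [False, True]))"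
    by (rule distinct_card) (simp add: distinct_n_lists)
  finally show ?thesis unfolding Lc_def .
qed

end


subsection \<open>Chains of hexagons\<close>

definition hex_vertex :: "nat \<Rightarrow> nat \<Rightarrow> nat \<Rightarrow> nat \<Rightarrow> nat" where
  "hex_vertex a b k j = (if j = 0 then a else if j = 1 then b else k + (j - 2))"

lemma hexagon_hex_vertex: "a \<noteq> b \<Longrightarrow> a < k \<Longrightarrow> b < k \<Longrightarrow> hexagon (hex_vertex a b k)"
  unfolding hexagon_def hex_vertex_def by (auto split: if_splits)

lemma hex_eq_hedges:
  assumes "a \<noteq> b" "a < k" "b < k"
  shows "hex a b k = hexagon.hedge (hex_vertex a b k) ` {..<6}"
proof -
  have "{..<6::nat} = {0, 1, 2, 3, 4, 5}" by auto
  thus ?thesis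
    by (simp add: hex_def hexagon.hedge_def[OF hexagon_hex_vertex[OF assms]] hex_vertex_def suc6_def
        insert_commute)
qed

lemma exit_edge_hex_vertex:
  assumes "d \<le> 2" "exit_edge d k = (a', b')" and ab: "a \<noteq> b" "a < k" "b < k"
  shows "k \<le> a' \<and> a' \<le> k + 3 \<and> k \<le> b' \<and> b' \<le> k + 3 \<and> a' \<noteq> b' \<and>
         a' = hex_vertex a b k (d + 3) \<and> b' = hex_vertex a b k (d + 2) \<and>
         {a', b'} = hexagon.hedge (hex_vertex a b k) (d + 2)"
proof -
  have "d = 0 \<or> d = 1 \<or> d = 2" using assms(1) by auto
  thus ?thesis using assms(2)
    by (auto simp: hex_vertex_def hexagon.hedge_def[OF hexagon_hex_vertex[OF ab]] suc6_def)
qed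

lemma card_cut_dmatchings_hex:
  assumes ab: "a \<noteq> b" "a < k" "b < k" and d: "d \<le> 2" and ex: "exit_edge d k = (a', b')"
  shows "card (cut_dmatchings (hex a b k) {a', b'} a b a' b' (outer s a b) (inner s a b)
           (outer t a' b') (inner t a' b')) = transfer d s t"
proof -
  interpret hexagon "hex_vertex a b k" by (rule hexagon_hex_vertex[OF ab])
  have e: "a' = hex_vertex a b k (d + 3)" "b' = hex_vertex a b k (d + 2)" "{a', b'} = hedge (d + 2)"
    using exit_edge_hex_vertex[OF d ex ab] by auto
  have v01: "hex_vertex a b k 0 = a" "hex_vertex a b k 1 = b" by (simp_all add: hex_vertex_def)
  have "d + 2 < 6" "d + 3 < 6" using d by auto
  from card_cut_dmatchings_eq_length_filter[OF this, of s t] show ?thesis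
    unfolding e(3) hex_eq_hedges[OF ab] v01 e(1,2)[symmetric] transfer_def .
qed

fun edge_count :: "bstate \<Rightarrow> nat" where
  "edge_count (x1, x2, y1, y2) =
     (if \<not> y1 \<and> \<not> y2 \<and> (x1 \<or> x2) then 1 else 0) + (if y1 \<and> y2 \<and> \<not> x1 \<and> \<not> x2 then 1 else 0)"

lemma card_dmatchings_edge:
  assumes pq: "p \<noteq> q"
  shows "card (dmatchings {{p,q}} p q (outer t p q) (inner t p q)) = edge_count t"
proof -
  obtain x1 x2 y1 y2 where t: "t = (x1,x2,y1,y2)" by (cases t) auto
  have "dmatchings {{p,q}} p q (outer t p q) (inner t p q) =
     {M. M = {} \<and> (\<not>y1 \<and> \<not>y2 \<and> (x1 \<or> x2))} \<union> {M. M = {{p,q}} \<and> (y1 \<and> y2 \<and> \<not>x1 \<and> \<not>x2)}"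
    unfolding t dmatchings_def outer.simps inner.simps using pq
    by (auto simp: pick_def matching_def subset_singleton_iff)
  thus ?thesis unfolding t by (cases x1; cases x2; cases y1; cases y2) auto
qed

lemma hexchain_vertices: "\<forall>e\<in>hexchain a b k ds. e \<subseteq> {a,b} \<union> {x. k \<le> x}"
proof (induction ds arbitrary: a b k)
  case Nil thus ?case by (auto simp: hex_def)
next
  case (Cons d ds)
  obtain a' b' where ex: "exit_edge d k = (a',b')" by (cases "exit_edge d k") auto
  have ab': "k \<le> a' \<and> k \<le> b'" using ex by (auto split: if_splits)
  have t: "x \<in> {a,b} \<union> {x. k \<le> x}" if "e \<in> hexchain a' b' (k+4) ds" "x \<in> e" for e x
  proof -
    have "x \<in> {a',b'} \<union> {x. k+4 \<le> x}" using Cons.IH[of a' b' "k+4"] that by blast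
    thus ?thesis using ab' by auto
  qed
  have hc: "hexchain a b k (d#ds) = hex a b k \<union> hexchain a' b' (k+4) ds" using ex by simp
  show ?case unfolding hc using t by (auto simp: hex_def)
qed

lemma finite_hexchain: "finite (hexchain a b k ds)"
proof (induction ds arbitrary: a b k)
  case Nil thus ?case by (simp add: hex_def)
next
  case (Cons d ds) thus ?case by (simp add: hex_def split: prod.split)
qed

lemma edge_in_hexchain: "{a,b} \<in> hexchain a b k ds"
  by (cases ds) (auto simp: hex_def)

lemma empty_notin_hexchain: "{} \<notin> hexchain a b k ds"
proof (induction ds arbitrary: a b k)
  case Nil thus ?case by (auto simp: hex_def)
next
  case (Cons d ds) thus ?case by (auto simp: hex_def split: prod.splits)
qed

lemma hex_edge_eq:
  assumes "a \<noteq> b" "a < k" "b < k" "e \<in> hex a b k" "e \<subseteq> {u, w}"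
  shows "e = {u, w}"
proof -
  have "e = {a, b} \<or> e = {b, k} \<or> e = {k, k + 1} \<or> e = {k + 1, k + 2} \<or> e = {k + 2, k + 3} \<or> e = {k + 3, a}"
    using assms(4) by (simp add: hex_def)
  moreover have "a \<noteq> b" "b \<noteq> k" "k \<noteq> k + 1" "k + 1 \<noteq> k + 2" "k + 2 \<noteq> k + 3" "k + 3 \<noteq> a"
    using assms by auto
  moreover have "x \<noteq> y \<Longrightarrow> {x, y} \<subseteq> {u, w} \<Longrightarrow> {x, y} = {u, w}" for x y :: nat by blast
  ultimately show ?thesis using assms(5) by metis
qed

lemma card_dmatchings_hex_glue:
  assumes ab: "a \<noteq> b" "a < k" "b < k" and d: "d \<le> 2" and ex: "exit_edge d k = (a', b')"
    and fin: "finite T" and fT: "{a', b'} \<in> T" and TV: "\<forall>e\<in>T. e \<subseteq> {a', b'} \<union> {x. k + 4 \<le> x}"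
  shows "card (dmatchings (hex a b k \<union> T) a b (outer s a b) (inner s a b)) =
    (\<Sum>t\<leftarrow>bstates. transfer d s t * card (dmatchings T a' b' (outer t a' b') (inner t a' b')))"
proof -
  have ef: "k \<le> a'" "a' \<le> k + 3" "k \<le> b'" "b' \<le> k + 3" "a' \<noteq> b'"
    "{a', b'} = hexagon.hedge (hex_vertex a b k) (d + 2)"
    using exit_edge_hex_vertex[OF d ex ab] by auto
  have "d + 2 \<in> {..<6}" using d by simp
  hence fH: "{a', b'} \<in> hex a b k" unfolding hex_eq_hedges[OF ab] ef(6) by (rule imageI)
  define VH where "VH = {a, b, k, k + 1, k + 2, k + 3}"
  define VT where "VT = {a', b'} \<union> {x. k + 4 \<le> x}"
  have HV: "\<forall>e\<in>hex a b k. e \<subseteq> VH" unfolding VH_def hex_def by auto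
  have "a' = k \<or> a' = k + 1 \<or> a' = k + 2 \<or> a' = k + 3" "b' = k \<or> b' = k + 1 \<or> b' = k + 2 \<or> b' = k + 3"
    using ef(1-4) by presburger+
  hence "a' \<in> VH" "b' \<in> VH" unfolding VH_def by blast+
  moreover have "a' \<in> VT" "b' \<in> VT" unfolding VT_def by blast+
  moreover have "x \<in> {a', b'}" if "x \<in> VH" "x \<in> VT" for x
  proof -
    have "x \<notin> {x. k + 4 \<le> x}" using that(1) ab unfolding VH_def by auto
    thus ?thesis using that(2) unfolding VT_def by blast
  qed
  ultimately have VHT: "VH \<inter> VT = {a', b'}" by blast
  have HT: "hex a b k \<inter> T = {{a', b'}}"
  proof
    show "{{a', b'}} \<subseteq> hex a b k \<inter> T" using fH fT by auto
    show "hex a b k \<inter> T \<subseteq> {{a', b'}}"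
    proof
      fix e assume e: "e \<in> hex a b k \<inter> T"
      have "e \<subseteq> VH \<inter> VT" using e HV TV unfolding VT_def by blast
      hence "e \<subseteq> {a', b'}" using VHT by simp
      thus "e \<in> {{a', b'}}" using hex_edge_eq[OF ab] e by blast
    qed
  qed
  interpret edge_gluing "hex a b k" T "{a', b'}" a b a' b' VH VT
  proof
    show "finite (hex a b k)" by (simp add: hex_def)
    show "\<forall>e\<in>T. e \<subseteq> VT" using TV unfolding VT_def .
    show "a \<notin> VT" "b \<notin> VT" unfolding VT_def using ef(1,3) ab by auto
  qed (use fin fH fT ef(5) HV VHT HT in auto)
  have "card (dmatchings (hex a b k \<union> T) a b (outer s a b) (inner s a b)) =
    (\<Sum>t\<leftarrow>bstates. card (cut_dmatchings (hex a b k) {a', b'} a b a' b' (outer s a b) (inner s a b)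
       (outer t a' b') (inner t a' b')) * card (dmatchings T a' b' (outer t a' b') (inner t a' b')))"
    by (rule card_dmatchings_glue[OF outer_subset])
  also have "\<dots> = (\<Sum>t\<leftarrow>bstates. transfer d s t * card (dmatchings T a' b' (outer t a' b') (inner t a' b')))"
    using card_cut_dmatchings_hex[OF ab d ex] by simp
  finally show ?thesis .
qed

text \<open>The last hexagon counts as glued along its own edge \<open>{k + 2, k + 1}\<close>, the exit edge of a
  straight annelation; this is why \<open>transfer\<close> \<open>1\<close> appears in the base case.\<close>
fun chain_count :: "nat list \<Rightarrow> bstate \<Rightarrow> nat" where
  "chain_count [] s = (\<Sum>t\<leftarrow>bstates. transfer 1 s t * edge_count t)"
| "chain_count (d # ds) s = (\<Sum>t\<leftarrow>bstates. transfer d s t * chain_count ds t)"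

lemma card_dmatchings_hexchain:
  "\<forall>d\<in>set ds. d \<le> 2 \<Longrightarrow> a \<noteq> b \<Longrightarrow> a < k \<Longrightarrow> b < k \<Longrightarrow>
   card (dmatchings (hexchain a b k ds) a b (outer s a b) (inner s a b)) = chain_count ds s"
proof (induction ds arbitrary: a b k s)
  case Nil
  obtain a' b' where ex: "exit_edge 1 k = (a', b')" by (cases "exit_edge 1 k") auto
  have ef: "a' = k + 2" "b' = k + 1" using ex by auto
  have "hexchain a b k [] = hex a b k \<union> {{a', b'}}" unfolding ef by (auto simp: hex_def)
  hence "card (dmatchings (hexchain a b k []) a b (outer s a b) (inner s a b)) =
      (\<Sum>t\<leftarrow>bstates. transfer 1 s t * card (dmatchings {{a', b'}} a' b' (outer t a' b') (inner t a' b')))"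
    using card_dmatchings_hex_glue[OF Nil.prems(2,3,4) _ ex, of "{{a', b'}}" s] by auto
  also have "\<dots> = chain_count [] s" using card_dmatchings_edge[of a' b'] ef by simp
  finally show ?case .
next
  case (Cons d ds)
  obtain a' b' where ex: "exit_edge d k = (a', b')" by (cases "exit_edge d k") auto
  have d: "d \<le> 2" using Cons.prems by simp
  have ef: "k \<le> a' \<and> a' \<le> k + 3 \<and> k \<le> b' \<and> b' \<le> k + 3 \<and> a' \<noteq> b'"
    using exit_edge_hex_vertex[OF d ex Cons.prems(2,3,4)] by auto
  have hc: "hexchain a b k (d # ds) = hex a b k \<union> hexchain a' b' (k + 4) ds" using ex by simp
  have "card (dmatchings (hexchain a b k (d # ds)) a b (outer s a b) (inner s a b)) =
      (\<Sum>t\<leftarrow>bstates. transfer d s t *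
         card (dmatchings (hexchain a' b' (k + 4) ds) a' b' (outer t a' b') (inner t a' b')))"
    unfolding hc
    by (rule card_dmatchings_hex_glue[OF Cons.prems(2,3,4) d ex finite_hexchain edge_in_hexchain hexchain_vertices])
  also have "\<dots> = (\<Sum>t\<leftarrow>bstates. transfer d s t * chain_count ds t)"
    using Cons.IH[of a' b' "k + 4"] Cons.prems ef by simp
  finally show ?case by simp
qed

lemma sum_Pow_doubleton: "p \<noteq> q \<Longrightarrow> (\<Sum>Y\<in>Pow {p, q}. f Y) = f {} + f {p} + f {q} + f {p, q}"
proof -
  assume pq: "p \<noteq> q"
  have "Pow {p, q} = {{}, {p}, {q}, {p, q}}" by (auto simp: Pow_insert)
  thus ?thesis using pq by (simp add: add.assoc)
qed

lemma Psi_benz_chain: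
  assumes "\<forall>d\<in>set ds. d \<le> 2"
  shows "Psi (benz_chain ds) = chain_count ds (False, False, False, False) + chain_count ds (False, False, True, False)
     + chain_count ds (False, False, False, True) + chain_count ds (False, False, True, True)"
proof -
  have c: "card (dmatchings (hexchain 0 1 2 ds) 0 1 (outer s 0 1) (inner s 0 1)) = chain_count ds s" for s
    by (rule card_dmatchings_hexchain[OF assms]) simp_all
  have "Psi (benz_chain ds) = (\<Sum>Y\<in>Pow {0, 1}. card (dmatchings (hexchain 0 1 2 ds) 0 1 {} Y))"
    unfolding benz_chain_def by (rule Psi_eq_sum_dmatchings[OF finite_hexchain empty_notin_hexchain])
  thus ?thesis
    using c[of "(False, False, False, False)"] c[of "(False, False, False, True)"]
      c[of "(False, False, True, False)"] c[of "(False, False, True, True)"]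
    by (simp add: sum_Pow_doubleton pick_def insert_commute)
qed


subsection \<open>The transfer matrices\<close>

lemma transfer0_table: "map (\<lambda>s. map (transfer 0 s) bstates) bstates =
    [[0,0,0,0,0,0,0,0,0,0,0,0,0,0,0,0],
     [0,0,0,0,1,0,1,0,0,0,0,0,0,0,0,0],
     [0,0,0,1,0,0,0,0,0,1,0,0,0,0,0,0],
     [1,1,1,1,0,0,1,0,1,1,0,0,1,0,0,0],
     [1,1,1,1,0,0,0,0,0,0,0,0,0,0,0,0],
     [0,0,0,0,0,0,0,0,0,0,0,0,0,0,0,0],
     [0,0,1,1,0,0,0,0,1,1,0,0,0,0,0,0],
     [0,0,0,0,0,0,0,0,0,0,0,0,0,0,0,0],
     [0,1,0,1,0,0,0,0,0,1,0,0,0,0,0,0],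
     [0,0,0,0,1,0,1,0,0,0,0,0,1,0,0,0],
     [0,0,0,0,0,0,0,0,0,0,0,0,0,0,0,0],
     [0,0,0,0,0,0,0,0,0,0,0,0,0,0,0,0],
     [1,1,1,1,0,0,0,0,1,1,0,0,0,0,0,0],
     [0,0,0,0,0,0,0,0,0,0,0,0,0,0,0,0],
     [0,0,0,0,0,0,0,0,0,0,0,0,0,0,0,0],
     [0,0,0,0,0,0,0,0,0,0,0,0,0,0,0,0]]"
  by code_simp

lemma transfer1_table: "map (\<lambda>s. map (transfer 1 s) bstates) bstates =
    [[0,0,0,0,0,0,0,0,0,0,0,0,0,0,0,0],
     [0,0,0,0,0,0,0,0,1,1,0,0,0,0,0,0],
     [0,0,0,0,1,0,1,0,0,0,0,0,0,0,0,0],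
     [1,1,1,2,0,0,1,0,0,1,0,0,1,0,0,0],
     [0,0,0,0,0,0,0,0,0,1,0,0,1,0,0,0],
     [0,0,0,0,0,0,0,0,0,0,0,0,0,0,0,0],
     [0,1,0,1,1,0,1,0,0,0,0,0,0,0,0,0],
     [0,0,0,0,0,0,0,0,0,0,0,0,0,0,0,0],
     [0,0,0,0,0,0,1,0,0,0,0,0,1,0,0,0],
     [0,0,1,1,0,0,0,0,1,1,0,0,0,0,0,0],
     [0,0,0,0,0,0,0,0,0,0,0,0,0,0,0,0],
     [0,0,0,0,0,0,0,0,0,0,0,0,0,0,0,0],
     [0,0,0,1,0,0,1,0,0,1,0,0,1,0,0,0],
     [0,0,0,0,0,0,0,0,0,0,0,0,0,0,0,0],
     [0,0,0,0,0,0,0,0,0,0,0,0,0,0,0,0],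
     [0,0,0,0,0,0,0,0,0,0,0,0,0,0,0,0]]"
  by code_simp

lemma transfer2_table: "map (\<lambda>s. map (transfer 2 s) bstates) bstates =
    [[0,0,0,0,0,0,0,0,0,0,0,0,0,0,0,0],
     [0,0,0,1,0,0,1,0,0,0,0,0,0,0,0,0],
     [0,0,0,0,0,0,0,0,1,1,0,0,0,0,0,0],
     [1,1,1,1,1,0,1,0,0,1,0,0,1,0,0,0],
     [0,0,1,1,0,0,1,0,0,0,0,0,0,0,0,0],
     [0,0,0,0,0,0,0,0,0,0,0,0,0,0,0,0],
     [0,0,0,0,0,0,0,0,1,1,0,0,1,0,0,0],
     [0,0,0,0,0,0,0,0,0,0,0,0,0,0,0,0],
     [1,1,1,1,0,0,0,0,0,0,0,0,0,0,0,0],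
     [0,1,0,1,1,0,1,0,0,0,0,0,0,0,0,0],
     [0,0,0,0,0,0,0,0,0,0,0,0,0,0,0,0],
     [0,0,0,0,0,0,0,0,0,0,0,0,0,0,0,0],
     [1,1,1,1,1,0,1,0,0,0,0,0,0,0,0,0],
     [0,0,0,0,0,0,0,0,0,0,0,0,0,0,0,0],
     [0,0,0,0,0,0,0,0,0,0,0,0,0,0,0,0],
     [0,0,0,0,0,0,0,0,0,0,0,0,0,0,0,0]]"
  by code_simp

lemmas transfer0 = transfer0_table[unfolded bstates_def, simplified]
lemmas transfer1 = transfer1_table[unfolded bstates_def, simplified]
lemmas transfer2 = transfer2_table[unfolded bstates_def, simplified]

fun swap_ends :: "bstate \<Rightarrow> bstate" where
  "swap_ends (x1, x2, y1, y2) = (x2, x1, y2, y1)"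

lemma swap_ends_swap_ends [simp]: "swap_ends (swap_ends s) = s"
  by (cases s) simp

lemma sum_list_bstates_swap_ends:
  fixes g :: "bstate \<Rightarrow> 'a::comm_monoid_add"
  shows "(\<Sum>t\<leftarrow>bstates. g (swap_ends t)) = (\<Sum>t\<leftarrow>bstates. g t)"
proof -
  have "bij swap_ends" by (rule o_bij[of swap_ends]) auto
  thus ?thesis unfolding sum_list_bstates by (rule sum.reindex_bij_betw)
qed

text \<open>The two kinks are mirror images of each other.\<close>
lemma transfer_2_eq_transfer_0_swap_ends: "transfer 2 s t = transfer 0 (swap_ends s) (swap_ends t)"
proof -
  have "\<forall>s\<in>set bstates. \<forall>t\<in>set bstates. transfer 2 s t = transfer 0 (swap_ends s) (swap_ends t)"
    by (simp add: bstates_def transfer0 transfer2)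
  thus ?thesis by (simp only: set_bstates ball_UNIV)
qed

lemma chain_count_Nil_table: "map (chain_count []) bstates = [0, 1, 1, 3, 1, 0, 2, 0, 1, 2, 0, 0, 2, 0, 0, 0]"
  by (simp add: bstates_def transfer1)

lemma chain_count_Nil_swap_ends: "chain_count [] (swap_ends s) = chain_count [] s"
proof -
  have "\<forall>s\<in>set bstates. chain_count [] (swap_ends s) = chain_count [] s"
    using chain_count_Nil_table by (simp add: bstates_def del: chain_count.simps)
  thus ?thesis by (rule ball_bstatesD)
qed

lemma chain_count_mirror:
  "\<forall>d\<in>set ds. d = 0 \<or> d = 2 \<Longrightarrow> chain_count (map (\<lambda>d. 2 - d) ds) s = chain_count ds (swap_ends s)"
proof (induction ds arbitrary: s)
  case Nil thus ?case using chain_count_Nil_swap_ends[of s] by (simp del: chain_count.simps)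
next
  case (Cons d ds)
  have mirror: "transfer (2 - d) s t = transfer d (swap_ends s) (swap_ends t)" for s t
    using Cons.prems transfer_2_eq_transfer_0_swap_ends[of s t]
      transfer_2_eq_transfer_0_swap_ends[of "swap_ends s" "swap_ends t"] by auto
  have "chain_count (map (\<lambda>d. 2 - d) (d # ds)) s
      = (\<Sum>t\<leftarrow>bstates. transfer d (swap_ends s) (swap_ends t) * chain_count ds (swap_ends t))"
    using Cons.IH Cons.prems by (simp add: mirror)
  also have "\<dots> = chain_count (d # ds) (swap_ends s)"
    using sum_list_bstates_swap_ends[of "\<lambda>t. transfer d (swap_ends s) t * chain_count ds t"] by simp
  finally show ?case .
qed


subsection \<open>The three chains\<close>

definition zigzag_dirs :: "nat \<Rightarrow> nat list" where
  "zigzag_dirs m = map (\<lambda>i. if even i then 0 else 2) [0..<m]"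

lemma zigzag_dirs_Suc: "zigzag_dirs (Suc m) = 0 # map (\<lambda>d. 2 - d) (zigzag_dirs m)"
proof -
  have "[0..<Suc m] = 0 # map Suc [0..<m]" by (simp add: map_Suc_upt upt_conv_Cons)
  thus ?thesis by (simp add: zigzag_dirs_def)
qed

definition acene_vec :: "nat \<Rightarrow> bstate \<Rightarrow> nat" where "acene_vec m = chain_count (replicate m 1)"
definition helicene_vec :: "nat \<Rightarrow> bstate \<Rightarrow> nat" where "helicene_vec m = chain_count (replicate m 0)"
definition zigzag_vec :: "nat \<Rightarrow> bstate \<Rightarrow> nat" where "zigzag_vec m = chain_count (zigzag_dirs m)"

lemma acene_vec_Suc: "acene_vec (Suc m) s = (\<Sum>t\<leftarrow>bstates. transfer 1 s t * acene_vec m t)"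
  by (simp add: acene_vec_def)

lemma helicene_vec_Suc: "helicene_vec (Suc m) s = (\<Sum>t\<leftarrow>bstates. transfer 0 s t * helicene_vec m t)"
  by (simp add: helicene_vec_def)

text \<open>Mirroring reduces the alternating zig-zag product to powers of a single matrix.\<close>
lemma zigzag_vec_Suc: "zigzag_vec (Suc m) s = (\<Sum>t\<leftarrow>bstates. transfer 0 s t * zigzag_vec m (swap_ends t))"
proof -
  have "\<forall>d\<in>set (zigzag_dirs m). d = 0 \<or> d = 2" by (auto simp: zigzag_dirs_def)
  thus ?thesis unfolding zigzag_vec_def zigzag_dirs_Suc chain_count.simps
    by (simp add: chain_count_mirror)
qed


lemma acene_vec_0: "map (acene_vec 0) bstates = [0, 1, 1, 3, 1, 0, 2, 0, 1, 2, 0, 0, 2, 0, 0, 0]"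
  using chain_count_Nil_table by (simp add: acene_vec_def del: chain_count.simps)

lemma acene_vec_1: "map (acene_vec 1) bstates = [0, 3, 3, 14, 4, 0, 7, 0, 4, 7, 0, 0, 9, 0, 0, 0]"
  by (simp add: acene_vec_Suc[of 0, simplified] bstates_def transfer1
      acene_vec_0[unfolded bstates_def, simplified])

lemma acene_vec_2: "map (acene_vec 2) bstates = [0, 11, 11, 57, 16, 0, 28, 0, 16, 28, 0, 0, 37, 0, 0, 0]"
  by (simp add: acene_vec_Suc[of 1, unfolded Suc_1] bstates_def transfer1
      acene_vec_1[unfolded bstates_def, simplified])

lemma acene_vec_3: "map (acene_vec 3) bstates = [0, 44, 44, 229, 65, 0, 112, 0, 65, 112, 0, 0, 150, 0, 0, 0]"
  by (simp add: acene_vec_Suc[of 2, unfolded Suc_eq_plus1, simplified] bstates_def transfer1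
      acene_vec_2[unfolded bstates_def, simplified])

lemma acene_vec_4: "map (acene_vec 4) bstates = [0, 177, 177, 920, 262, 0, 450, 0, 262, 450, 0, 0, 603, 0, 0, 0]"
  by (simp add: acene_vec_Suc[of 3, unfolded Suc_eq_plus1, simplified] bstates_def transfer1
      acene_vec_3[unfolded bstates_def, simplified])

lemma acene_vec_5: "map (acene_vec 5) bstates = [0, 712, 712, 3697, 1053, 0, 1809, 0, 1053, 1809, 0, 0, 2423, 0, 0, 0]"
  by (simp add: acene_vec_Suc[of 4, unfolded Suc_eq_plus1, simplified] bstates_def transfer1
      acene_vec_4[unfolded bstates_def, simplified])

lemma helicene_vec_0: "map (helicene_vec 0) bstates = [0, 1, 1, 3, 1, 0, 2, 0, 1, 2, 0, 0, 2, 0, 0, 0]"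
  using chain_count_Nil_table by (simp add: helicene_vec_def del: chain_count.simps)

lemma helicene_vec_1: "map (helicene_vec 1) bstates = [0, 3, 5, 12, 5, 0, 7, 0, 6, 5, 0, 0, 8, 0, 0, 0]"
  by (simp add: helicene_vec_Suc[of 0, simplified] bstates_def transfer0
      helicene_vec_0[unfolded bstates_def, simplified])

lemma helicene_vec_2: "map (helicene_vec 2) bstates = [0, 12, 17, 46, 20, 0, 28, 0, 20, 20, 0, 0, 31, 0, 0, 0]"
  by (simp add: helicene_vec_Suc[of 1, unfolded Suc_1] bstates_def transfer0
      helicene_vec_1[unfolded bstates_def, simplified])

lemma helicene_vec_3: "map (helicene_vec 3) bstates = [0, 48, 66, 174, 75, 0, 103, 0, 78, 79, 0, 0, 115, 0, 0, 0]"
  by (simp add: helicene_vec_Suc[of 2, unfolded Suc_eq_plus1, simplified] bstates_def transfer0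
      helicene_vec_2[unfolded bstates_def, simplified])

lemma helicene_vec_4: "map (helicene_vec 4) bstates = [0, 178, 253, 663, 288, 0, 397, 0, 301, 293, 0, 0, 445, 0, 0, 0]"
  by (simp add: helicene_vec_Suc[of 3, unfolded Suc_eq_plus1, simplified] bstates_def transfer0
      helicene_vec_3[unfolded bstates_def, simplified])

lemma helicene_vec_5: "map (helicene_vec 5) bstates = [0, 685, 956, 2530, 1094, 0, 1510, 0, 1134, 1130, 0, 0, 1688, 0, 0, 0]"
  by (simp add: helicene_vec_Suc[of 4, unfolded Suc_eq_plus1, simplified] bstates_def transfer0
      helicene_vec_4[unfolded bstates_def, simplified])

lemma helicene_vec_6: "map (helicene_vec 6) bstates = [0, 2604, 3660, 9633, 4171, 0, 5750, 0, 4345, 4292, 0, 0, 6435, 0, 0, 0]"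
  by (simp add: helicene_vec_Suc[of 5, unfolded Suc_eq_plus1, simplified] bstates_def transfer0
      helicene_vec_5[unfolded bstates_def, simplified])

lemma helicene_vec_7: "map (helicene_vec 7) bstates = [0, 9921, 13925, 36719, 15897, 0, 21930, 0, 16529, 16356, 0, 0, 24534, 0, 0, 0]"
  by (simp add: helicene_vec_Suc[of 6, unfolded Suc_eq_plus1, simplified] bstates_def transfer0
      helicene_vec_6[unfolded bstates_def, simplified])

lemma zigzag_vec_0: "map (zigzag_vec 0) bstates = [0, 1, 1, 3, 1, 0, 2, 0, 1, 2, 0, 0, 2, 0, 0, 0]"
  using chain_count_Nil_table by (simp add: zigzag_vec_def zigzag_dirs_def del: chain_count.simps)

lemma zigzag_vec_1: "map (zigzag_vec 1) bstates = [0, 3, 5, 12, 5, 0, 7, 0, 6, 5, 0, 0, 8, 0, 0, 0]"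
  by (simp add: zigzag_vec_Suc[of 0, simplified] bstates_def transfer0
      zigzag_vec_0[unfolded bstates_def, simplified])

lemma zigzag_vec_2: "map (zigzag_vec 2) bstates = [0, 11, 19, 45, 20, 0, 27, 0, 24, 19, 0, 0, 32, 0, 0, 0]"
  by (simp add: zigzag_vec_Suc[of 1, unfolded Suc_1] bstates_def transfer0
      zigzag_vec_1[unfolded bstates_def, simplified])

lemma zigzag_vec_3: "map (zigzag_vec 3) bstates = [0, 43, 72, 173, 75, 0, 103, 0, 91, 75, 0, 0, 122, 0, 0, 0]"
  by (simp add: zigzag_vec_Suc[of 2, unfolded Suc_eq_plus1, simplified] bstates_def transfer0
      zigzag_vec_2[unfolded bstates_def, simplified])

lemma zigzag_vec_4: "map (zigzag_vec 4) bstates = [0, 166, 276, 663, 288, 0, 394, 0, 348, 288, 0, 0, 466, 0, 0, 0]"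
  by (simp add: zigzag_vec_Suc[of 3, unfolded Suc_eq_plus1, simplified] bstates_def transfer0
      zigzag_vec_3[unfolded bstates_def, simplified])

lemma zigzag_vec_5: "map (zigzag_vec 5) bstates = [0, 636, 1057, 2541, 1105, 0, 1511, 0, 1333, 1102, 0, 0, 1787, 0, 0, 0]"
  by (simp add: zigzag_vec_Suc[of 4, unfolded Suc_eq_plus1, simplified] bstates_def transfer0
      zigzag_vec_4[unfolded bstates_def, simplified])

lemma zigzag_vec_6: "map (zigzag_vec 6) bstates = [0, 2435, 4052, 9739, 4234, 0, 5793, 0, 5109, 4222, 0, 0, 6850, 0, 0, 0]"
  by (simp add: zigzag_vec_Suc[of 5, unfolded Suc_eq_plus1, simplified] bstates_def transfer0
      zigzag_vec_5[unfolded bstates_def, simplified])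

lemma zigzag_vec_7: "map (zigzag_vec 7) bstates = [0, 9331, 15532, 37325, 16226, 0, 22201, 0, 19584, 16181, 0, 0, 26253, 0, 0, 0]"
  by (simp add: zigzag_vec_Suc[of 6, unfolded Suc_eq_plus1, simplified] bstates_def transfer0
      zigzag_vec_6[unfolded bstates_def, simplified])

lemmas acene_vec_tables =
  acene_vec_0 acene_vec_1 acene_vec_2
  acene_vec_3 acene_vec_4 acene_vec_5
lemmas acene_vec_values = acene_vec_tables[unfolded bstates_def, simplified]
lemmas helicene_vec_tables =
  helicene_vec_0 helicene_vec_1 helicene_vec_2 helicene_vec_3
  helicene_vec_4 helicene_vec_5 helicene_vec_6 helicene_vec_7
lemmas helicene_vec_values = helicene_vec_tables[unfolded bstates_def, simplified]
lemmas zigzag_vec_tables =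
  zigzag_vec_0 zigzag_vec_1 zigzag_vec_2 zigzag_vec_3
  zigzag_vec_4 zigzag_vec_5 zigzag_vec_6 zigzag_vec_7
lemmas zigzag_vec_values = zigzag_vec_tables[unfolded bstates_def, simplified]

subsection \<open>The recurrences\<close>

lemma transfer_recurrence:
  fixes u :: "nat \<Rightarrow> bstate \<Rightarrow> nat"
  assumes step: "\<And>m s. u (Suc m) s = (\<Sum>t\<leftarrow>bstates. K s t * u m (\<sigma> t))"
    and base: "\<And>s. u p s = (\<Sum>i<p. c i * u i s)"
  shows "u (m + p) s = (\<Sum>i<p. c i * u (m + i) s)"
proof (induction m arbitrary: s)
  case 0 show ?case using base by simp
next
  case (Suc m)
  have "u (Suc m + p) s = (\<Sum>t\<leftarrow>bstates. K s t * u (m + p) (\<sigma> t))" using step[of "m + p" s] by simp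
  also have "\<dots> = (\<Sum>t\<leftarrow>bstates. K s t * (\<Sum>i<p. c i * u (m + i) (\<sigma> t)))" using Suc.IH by simp
  also have "\<dots> = (\<Sum>t\<in>UNIV. \<Sum>i<p. c i * (K s t * u (m + i) (\<sigma> t)))"
    unfolding sum_list_bstates by (simp add: sum_distrib_left mult.left_commute)
  also have "\<dots> = (\<Sum>i<p. \<Sum>t\<in>UNIV. c i * (K s t * u (m + i) (\<sigma> t)))" by (rule sum.swap)
  also have "\<dots> = (\<Sum>i<p. c i * (\<Sum>t\<leftarrow>bstates. K s t * u (m + i) (\<sigma> t)))"
    unfolding sum_list_bstates by (simp add: sum_distrib_left)
  also have "\<dots> = (\<Sum>i<p. c i * u (Suc m + i) s)" using step by simp
  finally show ?case .
qed

definition boundary_sum :: "(bstate \<Rightarrow> nat) \<Rightarrow> nat" where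
  "boundary_sum u = u (False, False, False, False) + u (False, False, True, False)
     + u (False, False, False, True) + u (False, False, True, True)"

lemma lessThan_5: "{..<5::nat} = {0, 1, 2, 3, 4}" by auto
lemma lessThan_7: "{..<7::nat} = {0, 1, 2, 3, 4, 5, 6}" by auto

lemma acene_vec_recurrence: "acene_vec (m + 5) s = (\<Sum>i<5. [1, 1, 0, 0, 4] ! i * acene_vec (m + i) s)"
proof (rule transfer_recurrence[where K = "transfer 1" and \<sigma> = id])
  show "acene_vec (Suc m) s = (\<Sum>t\<leftarrow>bstates. transfer 1 s t * acene_vec m (id t))" for m s
    by (simp add: acene_vec_Suc)
  have "\<forall>s\<in>set bstates. acene_vec 5 s = (\<Sum>i<5. [1, 1, 0, 0, 4] ! i * acene_vec i s)"
    by (simp add: bstates_def lessThan_5 acene_vec_values)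
  thus "acene_vec 5 s = (\<Sum>i<5. [1, 1, 0, 0, 4] ! i * acene_vec i s)" for s by (rule ball_bstatesD)
qed

lemma helicene_vec_recurrence:
  "helicene_vec (m + 7) s = (\<Sum>i<7. [2, 4, 7, 6, 12, 7, 1] ! i * helicene_vec (m + i) s)"
proof (rule transfer_recurrence[where K = "transfer 0" and \<sigma> = id])
  show "helicene_vec (Suc m) s = (\<Sum>t\<leftarrow>bstates. transfer 0 s t * helicene_vec m (id t))" for m s
    by (simp add: helicene_vec_Suc)
  have "\<forall>s\<in>set bstates. helicene_vec 7 s = (\<Sum>i<7. [2, 4, 7, 6, 12, 7, 1] ! i * helicene_vec i s)"
    by (simp add: bstates_def lessThan_7 helicene_vec_values)
  thus "helicene_vec 7 s = (\<Sum>i<7. [2, 4, 7, 6, 12, 7, 1] ! i * helicene_vec i s)" for s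
    by (rule ball_bstatesD)
qed

lemma zigzag_vec_recurrence:
  "zigzag_vec (m + 7) s = (\<Sum>i<7. [1, 5, 7, 7, 6, 1, 3] ! i * zigzag_vec (m + i) s)"
proof (rule transfer_recurrence[where K = "transfer 0" and \<sigma> = swap_ends])
  show "zigzag_vec (Suc m) s = (\<Sum>t\<leftarrow>bstates. transfer 0 s t * zigzag_vec m (swap_ends t))" for m s
    by (rule zigzag_vec_Suc)
  have "\<forall>s\<in>set bstates. zigzag_vec 7 s = (\<Sum>i<7. [1, 5, 7, 7, 6, 1, 3] ! i * zigzag_vec i s)"
    by (simp add: bstates_def lessThan_7 zigzag_vec_values)
  thus "zigzag_vec 7 s = (\<Sum>i<7. [1, 5, 7, 7, 6, 1, 3] ! i * zigzag_vec i s)" for s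
    by (rule ball_bstatesD)
qed

lemma sequence_recurrence:
  fixes u :: "nat \<Rightarrow> bstate \<Rightarrow> nat" and n p :: nat
  assumes f: "\<And>n. 0 < n \<Longrightarrow> f n = boundary_sum (u (n - 1))"
    and rec: "\<And>m s. u (m + p) s = (\<Sum>i<p. c i * u (m + i) s)" and n: "p < n"
  shows "f n = (\<Sum>i<p. c i * f (n - (p - i)))"
proof -
  have "(n - 1 - p) + p = n - 1" using n by arith
  hence "f n = boundary_sum (u ((n - 1 - p) + p))" using f n by simp
  also have "\<dots> = (\<Sum>i<p. c i * boundary_sum (u (n - 1 - p + i)))"
    using rec by (simp add: boundary_sum_def sum.distrib distrib_left)
  also have "\<dots> = (\<Sum>i<p. c i * f (n - (p - i)))"
  proof (rule sum.cong)
    fix i assume "i \<in> {..<p}"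
    hence "0 < n - (p - i)" "n - (p - i) - 1 = n - 1 - p + i" using n by auto
    thus "c i * boundary_sum (u (n - 1 - p + i)) = c i * f (n - (p - i))" using f by simp
  qed simp
  finally show ?thesis .
qed

lemma ell_eq_boundary_sum: "0 < n \<Longrightarrow> ell n = boundary_sum (acene_vec (n - 1))"
  unfolding ell_def polyacene_def acene_vec_def boundary_sum_def
  using Psi_benz_chain[of "replicate (n - 1) 1"] by simp

lemma hh_eq_boundary_sum: "0 < n \<Longrightarrow> hh n = boundary_sum (helicene_vec (n - 1))"
  unfolding hh_def helicene_def helicene_vec_def boundary_sum_def
  using Psi_benz_chain[of "replicate (n - 1) 0"] by simp

lemma zz_eq_boundary_sum: "0 < n \<Longrightarrow> zz n = boundary_sum (zigzag_vec (n - 1))"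
proof -
  assume "0 < n"
  have "\<forall>d\<in>set (zigzag_dirs (n - 1)). d \<le> 2" by (auto simp: zigzag_dirs_def)
  thus ?thesis using \<open>0 < n\<close> Psi_benz_chain[of "zigzag_dirs (n - 1)"]
    unfolding zz_def zigzag_def zigzag_vec_def zigzag_dirs_def boundary_sum_def by simp
qed

lemma ell_values: "ell 0 = 1" "ell 1 = 5" "ell 2 = 20" "ell 3 = 79" "ell 4 = 317" "ell 5 = 1274"
  by (simp_all add: ell_eq_boundary_sum boundary_sum_def acene_vec_values) (simp add: ell_def)

lemma zz_values: "zz 0 = 1" "zz 1 = 5" "zz 2 = 20" "zz 3 = 75" "zz 4 = 288" "zz 5 = 1105"
    "zz 6 = 4234" "zz 7 = 16226"
  by (simp_all add: zz_eq_boundary_sum boundary_sum_def zigzag_vec_values) (simp add: zz_def)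

lemma hh_values: "hh 0 = 1" "hh 1 = 5" "hh 2 = 20" "hh 3 = 75" "hh 4 = 288" "hh 5 = 1094"
    "hh 6 = 4171" "hh 7 = 15897"
  by (simp_all add: hh_eq_boundary_sum boundary_sum_def helicene_vec_values) (simp add: hh_def)

lemma ell_recurrence: "5 \<le> n \<Longrightarrow> ell n = 4 * ell (n - 1) + ell (n - 4) + ell (n - 5)"
proof (cases "n = 5")
  case False
  assume "5 \<le> n"
  with False have "5 < n" by simp
  from sequence_recurrence[OF ell_eq_boundary_sum acene_vec_recurrence this] show ?thesis
    by (simp add: lessThan_5)
qed (use ell_values in simp)

lemma zz_recurrence: "7 \<le> n \<Longrightarrow> zz n = 3 * zz (n - 1) + zz (n - 2) + 6 * zz (n - 3) + 7 * zz (n - 4)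
    + 7 * zz (n - 5) + 5 * zz (n - 6) + zz (n - 7)"
proof (cases "n = 7")
  case False
  assume "7 \<le> n"
  with False have "7 < n" by simp
  from sequence_recurrence[OF zz_eq_boundary_sum zigzag_vec_recurrence this] show ?thesis
    by (simp add: lessThan_7)
qed (use zz_values in simp)

lemma hh_recurrence: "7 \<le> n \<Longrightarrow> hh n = hh (n - 1) + 7 * hh (n - 2) + 12 * hh (n - 3) + 6 * hh (n - 4)
    + 7 * hh (n - 5) + 4 * hh (n - 6) + 2 * hh (n - 7)"
proof (cases "n = 7")
  case False
  assume "7 \<le> n"
  with False have "7 < n" by simp
  from sequence_recurrence[OF hh_eq_boundary_sum helicene_vec_recurrence this] show ?thesis
    by (simp add: lessThan_7)
qed (use hh_values in simp)

theorem corollary4p5: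
  shows "(ell 0 = 1 \<and> ell 1 = 5 \<and> ell 2 = 20 \<and> ell 3 = 79 \<and> ell 4 = 317 \<and>
          (\<forall>n\<ge>5. ell n = 4 * ell (n-1) + ell (n-4) + ell (n-5)))
       \<and> (zz 0 = 1 \<and> zz 1 = 5 \<and> zz 2 = 20 \<and> zz 3 = 75 \<and> zz 4 = 288 \<and> zz 5 = 1105 \<and> zz 6 = 4234 \<and>
          (\<forall>n\<ge>7. zz n = 3 * zz (n-1) + zz (n-2) + 6 * zz (n-3) + 7 * zz (n-4)
                        + 7 * zz (n-5) + 5 * zz (n-6) + zz (n-7)))
       \<and> (hh 0 = 1 \<and> hh 1 = 5 \<and> hh 2 = 20 \<and> hh 3 = 75 \<and> hh 4 = 288 \<and> hh 5 = 1094 \<and> hh 6 = 4171 \<and>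
          (\<forall>n\<ge>7. hh n = hh (n-1) + 7 * hh (n-2) + 12 * hh (n-3) + 6 * hh (n-4)
                        + 7 * hh (n-5) + 4 * hh (n-6) + 2 * hh (n-7)))"
  using ell_values zz_values hh_values ell_recurrence zz_recurrence hh_recurrence by blast

end
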